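(* Let $\ell\ge2$ be an integer and $n=3^\ell+1$. Let $\beta$ be a primitive $2n$-th root of unity in an extension field of $\mathrm{GF}(3)$ and let $\mathbb{M}_\beta(x)$ be its minimal polynomial over $\mathrm{GF}(3)$. Let $\mathcal{C}(\ell)$ be the ternary negacyclic code of length $n$ with check polynomial $\mathbb{M}_\beta(x)$. Then $\mathcal{C}(\ell)$ has parameters $[n,2\ell,d]$ with $d\ge\frac{3^\ell+3}{2}$, and $\mathcal{C}(\ell)^\perp$ has parameters $[n,n-2\ell,d^\perp]$, where $d^\perp=3$ if $\ell$ is odd and $d^\perp=4$ if $\ell$ is even.
   Context: A ternary negacyclic code of length $n$ is an ideal of $\mathrm{GF}(3)[x]/(x^n+1)$; a code with check polynomial $h(x)$ (a monic divisor of $x^n+1$) is the one with generator polynomial $(x^n+1)/h(x)$. $[n,k,d]$ denotes length, dimension, minimum Hamming distance; $\perp$ is the Euclidean dual. *)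

theory Defs
  imports "Berlekamp_Zassenhaus.Finite_Field" "HOL-Computational_Algebra.Polynomial"
begin

text \<open>A three-element index type, so that GF(3) = tri mod_ring.\<close>
typedef tri = "{0::nat..<3}" by (rule exI[of _ 0]) simp

instance tri :: finite
proof
  show "finite (UNIV :: tri set)"
    by (metis finite_atLeastLessThan type_definition.Abs_image type_definition_tri finite_imageI)
qed

lemma card_tri: "CARD(tri) = 3"
  by (metis card_atLeastLessThan diff_zero type_definition.card type_definition_tri)

instance tri :: prime_card
  by standard (simp add: card_tri)

type_synonym gf3 = "tri mod_ring"

text \<open>The canonical embedding of GF(3) into a field of characteristic 3.\<close>
definition gf3_emb :: "gf3 \<Rightarrow> 'b::field" where
  "gf3_emb c = of_int (to_int_mod_ring c)"

definition primitive_root_unity :: "nat \<Rightarrow> 'b::field \<Rightarrow> bool" where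
  "primitive_root_unity m \<beta> \<longleftrightarrow> \<beta> ^ m = 1 \<and> (\<forall>k. 0 < k \<and> k < m \<longrightarrow> \<beta> ^ k \<noteq> 1)"

definition is_min_poly_GF3 :: "'b::field \<Rightarrow> gf3 poly \<Rightarrow> bool" where
  "is_min_poly_GF3 \<beta> M \<longleftrightarrow> lead_coeff M = 1 \<and> poly (map_poly gf3_emb M) \<beta> = 0 \<and>
     (\<forall>p. p \<noteq> 0 \<and> poly (map_poly gf3_emb p) \<beta> = 0 \<longrightarrow> degree M \<le> degree p)"

text \<open>The negacyclic code of length n with check polynomial h: the ideal of
  GF(3)[x]/(x^n+1) generated by (x^n+1)/h, with residues represented by their
  reduced representatives (polynomials of degree < n).\<close>
definition negacyclic_code :: "nat \<Rightarrow> gf3 poly \<Rightarrow> gf3 poly set" where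
  "negacyclic_code n h = {(a * ((monom 1 n + 1) div h)) mod (monom 1 n + 1) | a. True}"

definition hweight :: "nat \<Rightarrow> gf3 poly \<Rightarrow> nat" where
  "hweight n c = card {i. i < n \<and> coeff c i \<noteq> 0}"

definition hdist :: "nat \<Rightarrow> gf3 poly \<Rightarrow> gf3 poly \<Rightarrow> nat" where
  "hdist n c c' = card {i. i < n \<and> coeff c i \<noteq> coeff c' i}"

definition min_dist :: "nat \<Rightarrow> gf3 poly set \<Rightarrow> nat" where
  "min_dist n C = Min {hdist n c c' | c c'. c \<in> C \<and> c' \<in> C \<and> c \<noteq> c'}"

definition code_dim :: "gf3 poly set \<Rightarrow> nat" where
  "code_dim C = vector_space.dim (smult :: gf3 \<Rightarrow> gf3 poly \<Rightarrow> gf3 poly) C"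

definition dual_code :: "nat \<Rightarrow> gf3 poly set \<Rightarrow> gf3 poly set" where
  "dual_code n C = {v. degree v < n \<and> (\<forall>c\<in>C. (\<Sum>i<n. coeff v i * coeff c i) = 0)}"

end

theory Submission
  imports Defs
begin

(* Let q = 3^l, so n = q + 1, and let beta be a primitive 2n-th root of unity in characteristic 3.
   The 3-cyclotomic coset of 1 modulo 2n is {3^j mod 2n | j < 2l}; its elements are odd and at
   most q. Hence the minimal polynomial M of beta is the product of x - beta^(3^j), j < 2l,
   so C(l), the ideal generated by g = (x^n + 1)/M, has dimension deg M = 2l, and g vanishes at
   the (q + 1)/2 consecutive odd powers beta^(q+2), beta^(q+4), ..., beta^(2n-1), which gives
   d >= (q + 3)/2 by the BCH bound.

   Since n = 1 in GF(3), the discrete Fourier transform at the roots of x^n + 1 turns the inner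
   product of v with a codeword c into the trace of v(beta^-1) c(beta); as the trace form is
   nondegenerate, the dual code is {v. v(beta^-1) = 0}, of dimension n - 2l. A dual word of
   weight w is a vanishing sum of w signed powers of beta^-1. This is impossible for w = 1, 2,
   and for w = 3 when l is even: then x and 1 + x cannot both be 2n-th roots of unity unless
   x = 1, because the Frobenius map forces such an x into GF(9), where x^n = x^2. Conversely,
   1 + i + c beta^k = 0 with i^2 = -1 gives words of weight 3 when l is odd, and words of weight
   at most 4 always exist by pigeonhole on the n^2 words x^i +- x^j modulo M. *)

section \<open>Fields of characteristic 3\<close>

lemma three_eq_0_if_CHAR_3:
  assumes "CHAR('a::semiring_1) = 3"
  shows "(3::'a) = 0"
  using of_nat_CHAR[where 'a='a] assms by simp

lemma two_neq_zero_if_CHAR_3: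
  assumes "CHAR('a::semiring_1) = 3"
  shows "(2::'a) \<noteq> 0"
  using of_nat_eq_0_iff_char_dvd[where 'a='a, of 2] assms by simp

lemma one_neq_minus_one_if_CHAR_3:
  assumes "CHAR('a::ring_1) = 3"
  shows "(1::'a) \<noteq> -1"
  using two_neq_zero_if_CHAR_3[OF assms] by (simp add: eq_neg_iff_add_eq_0)

lemma CHAR_gf3 [simp]: "CHAR(gf3) = 3"
  by (simp add: card_tri)

lemma cube_eq_self_iff: "(c::'a::idom) ^ 3 = c \<longleftrightarrow> c = 0 \<or> c = 1 \<or> c = -1"
proof -
  have "c ^ 3 - c = c * (c - 1) * (c + 1)"
    by (simp add: power3_eq_cube algebra_simps)
  then have "c ^ 3 = c \<longleftrightarrow> c * (c - 1) * (c + 1) = 0"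
    by (metis right_minus_eq)
  then show ?thesis
    by (auto simp: eq_neg_iff_add_eq_0)
qed

lemma gf3_cases: "(c::gf3) = 0 \<or> c = 1 \<or> c = -1"
  using finite_field_power_card_eq_same[of c] cube_eq_self_iff[of c] by (simp add: card_tri)

lemma field_hom_gf3_emb:
  assumes char: "CHAR('b::field) = 3"
  shows "field_hom (gf3_emb :: gf3 \<Rightarrow> 'b)"
proof -
  have reduce: "(of_int (k mod 3) :: 'b) = of_int k" for k
    using of_int_mod_CHAR[where 'a='b, of k] char by simp
  show ?thesis
  proof
    fix x y :: gf3
    show "gf3_emb (x + y) = (gf3_emb x + gf3_emb y :: 'b)"
      unfolding gf3_emb_def to_int_mod_ring_add card_tri by (simp add: reduce)
    show "gf3_emb (x * y) = (gf3_emb x * gf3_emb y :: 'b)"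
      unfolding gf3_emb_def to_int_mod_ring_mult card_tri by (simp add: reduce)
  qed (simp_all add: gf3_emb_def)
qed

lemma pow_9_pow_eq_self_if_quadratic:
  fixes x t :: "'a::field"
  assumes char: "CHAR('a) = 3" and "t ^ 2 = 1" and quad: "x ^ 2 = t * x + 1"
  shows "x ^ 9 ^ h = x"
proof -
  have three: "(3::'a) = 0"
    using three_eq_0_if_CHAR_3[OF char] .
  have "x ^ 3 = t * x ^ 2 + x"
    using quad by (simp add: power3_eq_cube power2_eq_square algebra_simps)
  also have "\<dots> = t ^ 2 * x + t + x"
    using quad by (simp add: power2_eq_square algebra_simps)
  also have "\<dots> = t - x + 3 * x"
    using \<open>t ^ 2 = 1\<close> by simp
  finally have cube: "x ^ 3 = t - x"
    using three by simp
  have "x ^ 9 = (t - x) ^ 3"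
    by (simp flip: cube power_mult)
  also have "\<dots> = t * t ^ 2 - x ^ 3 + 3 * (t * x ^ 2 - t ^ 2 * x)"
    by (simp add: power3_eq_cube power2_eq_square algebra_simps)
  also have "\<dots> = x"
    using three \<open>t ^ 2 = 1\<close> cube by simp
  finally have "x ^ 9 = x" .
  then show ?thesis
  proof (induction h)
    case (Suc h)
    then show ?case
      by (simp add: power_mult)
  qed simp
qed

section \<open>Roots of unity\<close>

lemma primitive_root_unity_nonzero:
  assumes "primitive_root_unity m z" "0 < m"
  shows "z \<noteq> 0"
proof
  assume "z = 0"
  then have "z ^ m = 0"
    using \<open>0 < m\<close> by simp
  then show False
    using assms(1) unfolding primitive_root_unity_def by simp
qed

lemma primitive_root_unity_power_mod:
  assumes "primitive_root_unity m z"
  shows "z ^ a = z ^ (a mod m)"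
proof -
  have "z ^ a = (z ^ m) ^ (a div m) * z ^ (a mod m)"
    by (metis div_mult_mod_eq power_add power_mult mult.commute)
  then show ?thesis
    using assms unfolding primitive_root_unity_def by simp
qed

lemma primitive_root_unity_power_eq_iff:
  assumes prim: "primitive_root_unity m z" and "0 < m"
  shows "z ^ a = z ^ b \<longleftrightarrow> a mod m = b mod m"
proof -
  have z0: "z \<noteq> 0"
    using primitive_root_unity_nonzero[OF assms] .
  have less: "z ^ i \<noteq> z ^ j" if "i < j" "j < m" for i j
  proof
    assume eq: "z ^ i = z ^ j"
    have "z ^ i * z ^ (j - i) = z ^ j"
      using \<open>i < j\<close> by (simp flip: power_add)
    then have "z ^ i * z ^ (j - i) = z ^ i * 1"
      using eq by simp
    then have "z ^ (j - i) = 1"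
      using z0 by simp
    then show False
      using prim that unfolding primitive_root_unity_def by simp
  qed
  have "z ^ (a mod m) = z ^ (b mod m) \<longleftrightarrow> a mod m = b mod m"
    using less[of "a mod m" "b mod m"] less[of "b mod m" "a mod m"] \<open>0 < m\<close>
    by (metis linorder_neqE_nat mod_less_divisor)
  then show ?thesis
    using primitive_root_unity_power_mod[OF prim] by metis
qed

lemma primitive_root_unity_inverse:
  assumes "primitive_root_unity m (z::'a::field)" "0 < m"
  shows "primitive_root_unity m (inverse z)"
  using assms unfolding primitive_root_unity_def by (simp add: power_inverse)

lemma primitive_root_unity_half_power:
  assumes "primitive_root_unity (2 * n) (z::'a::field)" "0 < n"
  shows "z ^ n = -1"
proof -
  have "(z ^ n) ^ 2 = 1" and "z ^ n \<noteq> 1"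
    using assms unfolding primitive_root_unity_def by (simp_all flip: power_mult add: mult.commute)
  then show ?thesis
    by (simp add: power2_eq_1_iff)
qed

lemma card_roots_le_degree:
  fixes p :: "'a::idom poly"
  assumes "p \<noteq> 0" "A \<subseteq> {x. poly p x = 0}"
  shows "card A \<le> degree p"
  using card_mono[OF poly_roots_finite[OF assms(1)] assms(2)] card_poly_roots_bound[OF assms(1)]
  by linarith

lemma root_unity_eq_primitive_power:
  fixes z :: "'a::field"
  assumes prim: "primitive_root_unity m z" and "0 < m" and "w ^ m = 1"
  shows "\<exists>k<m. w = z ^ k"
proof (rule ccontr)
  assume no_power: "\<not> ?thesis"
  define p :: "'a poly" where "p = monom 1 m + [:-1:]"
  have deg: "degree p = m"
    using \<open>0 < m\<close> by (simp add: p_def degree_monom_eq degree_add_eq_left)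
  then have p0: "p \<noteq> 0"
    using \<open>0 < m\<close> by auto
  have "(z ^ k) ^ m = (z ^ m) ^ k" for k
    by (simp flip: power_mult add: mult.commute)
  then have roots: "insert w ((\<lambda>k. z ^ k) ` {..<m}) \<subseteq> {x. poly p x = 0}"
    using prim \<open>w ^ m = 1\<close> unfolding primitive_root_unity_def by (auto simp: p_def poly_monom)
  have "inj_on (\<lambda>k. z ^ k) {..<m}"
    by (rule inj_onI) (simp add: primitive_root_unity_power_eq_iff[OF prim \<open>0 < m\<close>])
  then have "card (insert w ((\<lambda>k. z ^ k) ` {..<m})) = Suc m"
    using no_power by (subst card_insert_disjoint) (auto simp: card_image)
  with card_roots_le_degree[OF p0 roots] deg show False
    by simp
qed

section \<open>Polynomials\<close>

lemma poly_eq_sum_lessThan: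
  fixes p :: "'a::comm_semiring_1 poly"
  assumes "degree p < n"
  shows "poly p x = (\<Sum>i<n. coeff p i * x ^ i)"
proof -
  have "poly p x = (\<Sum>i\<le>degree p. coeff p i * x ^ i)"
    by (rule poly_altdef)
  also have "\<dots> = (\<Sum>i<n. coeff p i * x ^ i)"
    using assms by (intro sum.mono_neutral_left) (auto simp: coeff_eq_0)
  finally show ?thesis .
qed

lemma poly_eq_sum_support:
  fixes p :: "'a::comm_semiring_1 poly"
  assumes "degree p < n"
  shows "poly p x = (\<Sum>i\<in>{i. i < n \<and> coeff p i \<noteq> 0}. coeff p i * x ^ i)"
  unfolding poly_eq_sum_lessThan[OF assms] by (intro sum.mono_neutral_right) auto

lemma poly_as_sum_of_monoms_lessThan:
  assumes "degree p < k"
  shows "(\<Sum>i<k. monom (coeff p i) i) = p"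
proof -
  have "{..<k} = {..k - 1}"
    using assms by auto
  then show ?thesis
    using assms by (simp add: poly_as_sum_of_monoms')
qed

lemma vandermonde_kernel_trivial:
  fixes c z :: "'i \<Rightarrow> 'a::field"
  assumes fin: "finite S" and inj: "inj_on z S"
    and sums: "\<And>k. k < card S \<Longrightarrow> (\<Sum>i\<in>S. c i * z i ^ k) = 0"
    and "j \<in> S"
  shows "c j = 0"
proof -
  \<comment> \<open>Pair the system with the coefficients of the Lagrange polynomial vanishing on \<open>z ` (S - {j})\<close>.\<close>
  define L where "L = (\<Prod>i\<in>S - {j}. [:- z i, 1:])"
  have "degree L = card S - 1"
    unfolding L_def using fin \<open>j \<in> S\<close> by (subst degree_prod_eq_sum_degree) auto
  then have deg: "degree L < card S"
    using fin \<open>j \<in> S\<close> card_gt_0_iff[of S] by auto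
  have "(\<Sum>i\<in>S. c i * poly L (z i)) = (\<Sum>k\<le>degree L. coeff L k * (\<Sum>i\<in>S. c i * z i ^ k))"
    by (simp add: poly_altdef sum_distrib_left mult_ac sum.swap[of _ S])
  also have "\<dots> = 0"
    using deg sums by (intro sum.neutral) auto
  also have "(\<Sum>i\<in>S. c i * poly L (z i)) = c j * poly L (z j)"
  proof -
    have "poly L (z i) = 0" if "i \<in> S - {j}" for i
      unfolding L_def poly_prod using fin that by auto
    then show ?thesis
      using fin \<open>j \<in> S\<close> by (simp add: sum.remove)
  qed
  finally show ?thesis
    using fin inj \<open>j \<in> S\<close> by (auto simp: L_def poly_prod inj_on_def)
qed

lemma bch_bound:
  fixes w :: "'a::field poly"
  assumes "w \<noteq> 0" "degree w < n" "\<beta> \<noteq> 0" and inj: "inj_on (\<lambda>i. \<alpha> ^ i) {..<n}"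
    and roots: "\<And>k. k < \<delta> \<Longrightarrow> poly w (\<beta> * \<alpha> ^ k) = 0"
  shows "\<delta> < card {i. i < n \<and> coeff w i \<noteq> 0}"
proof (rule ccontr)
  define S where "S = {i. i < n \<and> coeff w i \<noteq> 0}"
  assume "\<not> \<delta> < card {i. i < n \<and> coeff w i \<noteq> 0}"
  then have few: "card S \<le> \<delta>"
    unfolding S_def by simp
  have "coeff w (degree w) * \<beta> ^ degree w = 0"
  proof (rule vandermonde_kernel_trivial[of S "\<lambda>i. \<alpha> ^ i"])
    show "finite S" "inj_on (\<lambda>i. \<alpha> ^ i) S" "degree w \<in> S"
      using inj assms(1,2) by (auto simp: S_def intro: inj_on_subset)
    fix k assume "k < card S"
    have "(\<Sum>i\<in>S. coeff w i * \<beta> ^ i * (\<alpha> ^ i) ^ k) = poly w (\<beta> * \<alpha> ^ k)"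
      unfolding poly_eq_sum_support[OF assms(2)] S_def
      by (simp add: power_mult_distrib mult_ac flip: power_mult)
    also have "\<dots> = 0"
      using roots \<open>k < card S\<close> few by simp
    finally show "(\<Sum>i\<in>S. coeff w i * \<beta> ^ i * (\<alpha> ^ i) ^ k) = 0" .
  qed
  then show False
    using assms(1,3) by simp
qed

lemma card_polys_degree_less:
  assumes "0 < k"
  shows "card {p :: 'a::{comm_monoid_add,finite} poly. degree p < k} = CARD('a) ^ k"
proof -
  let ?coeffs = "\<lambda>p::'a poly. restrict (coeff p) {..<k}"
  let ?poly = "\<lambda>f. \<Sum>i<k. monom (f i) i"
  have "bij_betw ?coeffs {p. degree p < k} (PiE {..<k} (\<lambda>_. UNIV))"
  proof (rule bij_betw_byWitness[where f' = ?poly])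
    show "\<forall>p\<in>{p. degree p < k}. ?poly (?coeffs p) = p"
      by (simp add: poly_as_sum_of_monoms_lessThan)
    show "\<forall>f\<in>PiE {..<k} (\<lambda>_. UNIV). ?coeffs (?poly f) = f"
      by (auto simp: coeff_sum PiE_def extensional_def fun_eq_iff)
    show "?poly ` PiE {..<k} (\<lambda>_. UNIV) \<subseteq> {p. degree p < k}"
      using assms by (auto intro!: degree_sum_less le_less_trans[OF degree_monom_le])
    show "?coeffs ` {p. degree p < k} \<subseteq> PiE {..<k} (\<lambda>_. UNIV)"
      by (simp add: image_subset_iff)
  qed
  then show ?thesis
    by (simp add: bij_betw_same_card card_PiE)
qed

interpretation poly_vs: vector_space "smult :: 'a::field \<Rightarrow> 'a poly \<Rightarrow> 'a poly"
  by unfold_locales (simp_all add: smult_add_right smult_add_left)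

lemma inj_on_mult_monom:
  fixes r :: "'a::idom poly"
  assumes "r \<noteq> 0"
  shows "inj_on (\<lambda>i. r * monom 1 i) A"
  using assms by (auto intro!: inj_onI simp: monom_eq_iff')

lemma independent_mult_monoms:
  fixes r :: "'a::field poly"
  assumes "r \<noteq> 0"
  shows "poly_vs.independent ((\<lambda>i. r * monom 1 i) ` {..<k})"
proof (rule poly_vs.independent_if_scalars_zero)
  show "finite ((\<lambda>i. r * monom 1 i) ` {..<k})"
    by simp
  fix f x
  assume sum0: "(\<Sum>x\<in>(\<lambda>i. r * monom 1 i) ` {..<k}. smult (f x) x) = 0"
    and "x \<in> (\<lambda>i. r * monom 1 i) ` {..<k}"
  then obtain j where j: "j < k" "x = r * monom 1 j"
    by auto
  have "r * (\<Sum>i<k. monom (f (r * monom 1 i)) i) = 0"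
    using sum0 unfolding sum.reindex[OF inj_on_mult_monom[OF assms]]
    by (simp add: sum_distrib_left smult_monom flip: mult_smult_right)
  then have "coeff (\<Sum>i<k. monom (f (r * monom 1 i)) i) j = 0"
    using assms by simp
  then show "f x = 0"
    using j by (simp add: coeff_sum)
qed

lemma dim_multiples_degree_less:
  fixes r :: "'a::field poly"
  assumes "r \<noteq> 0" "degree r \<le> N"
  shows "poly_vs.dim {v. degree v < N \<and> r dvd v} = N - degree r"
proof -
  define k where "k = N - degree r"
  define B where "B = (\<lambda>i. r * monom 1 i) ` {..<k}"
  let ?V = "{v. degree v < N \<and> r dvd v}"
  have "B \<subseteq> ?V"
    using assms by (auto simp: B_def k_def degree_mult_eq degree_monom_eq)
  moreover have "?V \<subseteq> poly_vs.span B"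
  proof
    fix v assume "v \<in> ?V"
    then obtain w where v: "v = r * w" and "degree v < N"
      by (auto simp: dvd_def)
    show "v \<in> poly_vs.span B"
    proof (cases "w = 0")
      case False
      then have "degree w < k"
        using \<open>degree v < N\<close> assms by (simp add: v k_def degree_mult_eq)
      then have "v = r * (\<Sum>i<k. monom (coeff w i) i)"
        by (simp add: v poly_as_sum_of_monoms_lessThan)
      also have "\<dots> = (\<Sum>i<k. smult (coeff w i) (r * monom 1 i))"
        by (simp add: sum_distrib_left smult_monom flip: mult_smult_right)
      also have "\<dots> \<in> poly_vs.span B"
        unfolding B_def by (intro poly_vs.span_sum poly_vs.span_scale poly_vs.span_base) auto
      finally show ?thesis .
    qed (simp add: v poly_vs.span_zero)
  qed
  moreover have "card B = k"
    unfolding B_def by (simp add: card_image inj_on_mult_monom[OF assms(1)])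
  ultimately show ?thesis
    using poly_vs.basis_card_eq_dim independent_mult_monoms[OF assms(1)]
    unfolding B_def k_def by metis
qed

section \<open>Linear and negacyclic codes\<close>

lemma hdist_eq_hweight_diff: "hdist n c c' = hweight n (c - c')"
  unfolding hdist_def hweight_def by simp

lemma hweight_le: "hweight n v \<le> n"
  unfolding hweight_def by (rule order.trans[OF card_mono[of "{..<n}"]]) auto

lemma min_dist_eq_Min_hweight:
  assumes "\<And>c c'. c \<in> C \<Longrightarrow> c' \<in> C \<Longrightarrow> c - c' \<in> C" "0 \<in> C"
  shows "min_dist n C = Min {hweight n v |v. v \<in> C \<and> v \<noteq> 0}"
proof -
  have "{hdist n c c' |c c'. c \<in> C \<and> c' \<in> C \<and> c \<noteq> c'} = {hweight n v |v. v \<in> C \<and> v \<noteq> 0}"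
  proof (intro equalityI subsetI)
    fix d assume "d \<in> {hdist n c c' |c c'. c \<in> C \<and> c' \<in> C \<and> c \<noteq> c'}"
    then obtain c c' where "d = hweight n (c - c')" "c \<in> C" "c' \<in> C" "c \<noteq> c'"
      by (auto simp: hdist_eq_hweight_diff)
    then show "d \<in> {hweight n v |v. v \<in> C \<and> v \<noteq> 0}"
      using assms(1) by force
  next
    fix d assume "d \<in> {hweight n v |v. v \<in> C \<and> v \<noteq> 0}"
    then obtain v where "d = hdist n v 0" "v \<in> C" "v \<noteq> 0"
      by (auto simp: hdist_eq_hweight_diff)
    then show "d \<in> {hdist n c c' |c c'. c \<in> C \<and> c' \<in> C \<and> c \<noteq> c'}"
      using assms(2) by blast
  qed
  then show ?thesis
    unfolding min_dist_def by simp
qed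

lemma finite_hweights: "finite {hweight n v |v. P v}"
  by (rule finite_subset[of _ "{..n}"]) (auto simp: hweight_le)

lemma min_dist_ge_if_hweight_ge:
  assumes closed: "\<And>c c'. c \<in> C \<Longrightarrow> c' \<in> C \<Longrightarrow> c - c' \<in> C" and "0 \<in> C"
    and "v \<in> C" "v \<noteq> 0" and "\<And>w. w \<in> C \<Longrightarrow> w \<noteq> 0 \<Longrightarrow> d \<le> hweight n w"
  shows "d \<le> min_dist n C"
proof -
  have "d \<le> Min {hweight n v |v. v \<in> C \<and> v \<noteq> 0}"
    using assms(3-) by (subst Min_ge_iff) (auto simp: finite_hweights)
  then show ?thesis
    using min_dist_eq_Min_hweight[OF closed \<open>0 \<in> C\<close>] by simp
qed

lemma min_dist_eqI:
  assumes closed: "\<And>c c'. c \<in> C \<Longrightarrow> c' \<in> C \<Longrightarrow> c - c' \<in> C" and "0 \<in> C"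
    and "v \<in> C" "v \<noteq> 0" "hweight n v = d" and "\<And>w. w \<in> C \<Longrightarrow> w \<noteq> 0 \<Longrightarrow> d \<le> hweight n w"
  shows "min_dist n C = d"
proof -
  have "Min {hweight n v |v. v \<in> C \<and> v \<noteq> 0} = d"
    using assms(3-) by (intro Min_eqI) (auto simp: finite_hweights)
  then show ?thesis
    using min_dist_eq_Min_hweight[OF closed \<open>0 \<in> C\<close>] by simp
qed

lemma negacyclic_code_eq_multiples:
  assumes "0 < n" and dvd: "h dvd monom 1 n + 1"
  shows "negacyclic_code n h = {v. degree v < n \<and> (monom 1 n + 1) div h dvd v}"
proof -
  define X :: "gf3 poly" where "X = monom 1 n + 1"
  define g where "g = X div h"
  have deg_X: "degree X = n"
    unfolding X_def using \<open>0 < n\<close> by (simp add: degree_add_eq_left degree_monom_eq)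
  then have "X \<noteq> 0"
    using \<open>0 < n\<close> by auto
  have X_eq: "X = h * g"
    unfolding g_def using dvd[folded X_def] by (rule dvd_mult_div_cancel[symmetric])
  have "(a * g) mod X \<in> {v. degree v < n \<and> g dvd v}" for a
  proof -
    have "degree ((a * g) mod X) < n"
      using degree_mod_less'[OF \<open>X \<noteq> 0\<close>, of "a * g"] \<open>0 < n\<close> deg_X
      by (cases "(a * g) mod X = 0") auto
    moreover have "(a * g) mod X = g * (a - h * ((a * g) div X))"
    proof -
      have "(a * g) mod X = a * g - (a * g) div X * X"
        by (simp add: minus_div_mult_eq_mod)
      also have "\<dots> = g * (a - h * ((a * g) div X))"
        unfolding X_eq by (simp add: algebra_simps)
      finally show ?thesis .
    qed
    ultimately show ?thesis
      by (metis dvd_triv_left mem_Collect_eq)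
  qed
  moreover have "v \<in> {(a * g) mod X |a. True}" if "degree v < n" "g dvd v" for v
  proof -
    obtain w where "v = g * w"
      using \<open>g dvd v\<close> by (auto simp: dvd_def)
    then have "v = (w * g) mod X"
      using \<open>degree v < n\<close> deg_X by (simp add: mod_poly_less mult.commute)
    then show ?thesis
      by blast
  qed
  ultimately have "{(a * g) mod X |a. True} = {v. degree v < n \<and> g dvd v}"
    by blast
  then show ?thesis
    unfolding negacyclic_code_def g_def X_def .
qed

lemma code_dim_negacyclic_code:
  assumes "0 < n" and dvd: "h dvd monom 1 n + 1"
  shows "code_dim (negacyclic_code n h) = degree h"
proof -
  define X :: "gf3 poly" where "X = monom 1 n + 1"
  have deg_X: "degree X = n"
    unfolding X_def using \<open>0 < n\<close> by (simp add: degree_add_eq_left degree_monom_eq)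
  have X_eq: "X = h * (X div h)"
    using dvd[folded X_def] by (rule dvd_mult_div_cancel[symmetric])
  have "X \<noteq> 0"
    using deg_X \<open>0 < n\<close> by auto
  then have "h \<noteq> 0" "X div h \<noteq> 0"
    using X_eq by (metis mult_zero_left, metis mult_zero_right)
  then have "degree X = degree h + degree (X div h)"
    by (subst X_eq) (rule degree_mult_eq)
  then show ?thesis
    unfolding code_dim_def negacyclic_code_eq_multiples[OF assms] X_def[symmetric]
    using dim_multiples_degree_less[OF \<open>X div h \<noteq> 0\<close>, of n] deg_X by simp
qed

text \<open>The sign makes \<open>(i, j) \<mapsto> two_term i j\<close> injective on all pairs, including \<open>i = j\<close>.\<close>

definition two_term :: "nat \<Rightarrow> nat \<Rightarrow> gf3 poly" where
  "two_term i j = monom 1 i + monom (if i \<le> j then 1 else -1) j"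

lemma support_two_term: "{p. coeff (two_term i j) p \<noteq> 0} = {i, j}"
proof (cases "i = j")
  case True
  then have "two_term i j = monom 2 j"
    unfolding two_term_def by (simp add: add_monom)
  then show ?thesis
    using True two_neq_zero_if_CHAR_3[OF CHAR_gf3] by auto
qed (auto simp: two_term_def)

lemma two_term_eq_iff: "two_term i j = two_term i' j' \<longleftrightarrow> i = i' \<and> j = j'"
proof
  assume eq: "two_term i j = two_term i' j'"
  then have "{i, j} = {i', j'}"
    using support_two_term by metis
  then consider "i = i'" "j = j'" | "i = j'" "j = i'" "i \<noteq> j"
    by (auto simp: doubleton_eq_iff)
  then show "i = i' \<and> j = j'"
  proof cases
    case 2
    have "coeff (two_term i j) j = coeff (two_term j i) j" "coeff (two_term i j) i = coeff (two_term j i) i"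
      using eq 2 by simp_all
    then have "i \<le> j" "j \<le> i"
      using 2 two_neq_zero_if_CHAR_3[OF CHAR_gf3] by (auto simp: two_term_def split: if_splits)
    then show ?thesis
      using 2 by simp
  qed simp
qed simp

lemma degree_two_term_less: "i < n \<Longrightarrow> j < n \<Longrightarrow> degree (two_term i j) < n"
  unfolding two_term_def by (intro degree_add_less) (auto intro: le_less_trans[OF degree_monom_le])

section \<open>The negacyclic discrete Fourier transform\<close>

lemma odd_power_ratio:
  fixes z :: "'a::field"
  shows "(z ^ (2 * t + 1)) ^ j * inverse (z ^ (2 * t + 1)) ^ i
    = (z ^ j * inverse z ^ i) * ((z ^ j * inverse z ^ i) ^ 2) ^ t"
proof -
  have "(z ^ (2 * t + 1)) ^ j * inverse (z ^ (2 * t + 1)) ^ i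
      = (z ^ j) ^ (2 * t + 1) * (inverse z ^ i) ^ (2 * t + 1)"
    by (simp only: power_inverse[symmetric] power_mult[symmetric] mult.commute)
  also have "\<dots> = (z ^ j * inverse z ^ i) ^ (2 * t + 1)"
    by (simp only: power_mult_distrib)
  finally show ?thesis
    by (simp add: power_mult)
qed

lemma negacyclic_orthogonality:
  fixes \<gamma> :: "'a::field"
  assumes prim: "primitive_root_unity (2 * n) \<gamma>" and "i < n" "j < n"
  shows "(\<Sum>t<n. (\<gamma> ^ (2 * t + 1)) ^ j * inverse (\<gamma> ^ (2 * t + 1)) ^ i)
    = (if i = j then of_nat n else 0)"
proof -
  have "\<gamma> \<noteq> 0"
    using primitive_root_unity_nonzero[OF prim] \<open>i < n\<close> by simp
  define w where "w = \<gamma> ^ j * inverse \<gamma> ^ i"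
  have terms: "(\<gamma> ^ (2 * t + 1)) ^ j * inverse (\<gamma> ^ (2 * t + 1)) ^ i = w * (w ^ 2) ^ t" for t
    unfolding w_def by (rule odd_power_ratio)
  show ?thesis
  proof (cases "i = j")
    case True
    then have "w = 1"
      using \<open>\<gamma> \<noteq> 0\<close> by (simp add: w_def power_inverse)
    then show ?thesis
      unfolding terms using True by simp
  next
    case False
    have "w ^ 2 \<noteq> 1"
    proof
      assume "w ^ 2 = 1"
      moreover have "w ^ 2 = \<gamma> ^ (2 * j) * inverse (\<gamma> ^ (2 * i))"
        by (simp only: w_def power_mult_distrib power_inverse[symmetric] power_mult[symmetric] mult.commute)
      ultimately have "\<gamma> ^ (2 * j) = \<gamma> ^ (2 * i)"
        using \<open>\<gamma> \<noteq> 0\<close> by (simp add: field_simps)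
      then show False
        using False \<open>i < n\<close> \<open>j < n\<close> primitive_root_unity_power_eq_iff[OF prim] by simp
    qed
    moreover have "(w ^ 2) ^ n = 1"
    proof -
      have "(w ^ 2) ^ n = w ^ (2 * n)"
        by (simp add: power_mult)
      also have "\<dots> = (\<gamma> ^ (2 * n)) ^ j * inverse (\<gamma> ^ (2 * n)) ^ i"
        by (simp only: w_def power_mult_distrib power_inverse[symmetric] power_mult[symmetric] mult.commute)
      finally have "(w ^ 2) ^ n = (\<gamma> ^ (2 * n)) ^ j * inverse (\<gamma> ^ (2 * n)) ^ i" .
      then show ?thesis
        using prim unfolding primitive_root_unity_def by simp
    qed
    ultimately have "(\<Sum>t<n. (w ^ 2) ^ t) = 0"
      by (simp add: geometric_sum)
    then show ?thesis
      unfolding terms sum_distrib_left[symmetric] using False by simp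
  qed
qed

lemma negacyclic_parseval:
  fixes u c :: "'a::field poly"
  assumes prim: "primitive_root_unity (2 * n) \<gamma>" and "degree u < n" "degree c < n"
  shows "of_nat n * (\<Sum>i<n. coeff u i * coeff c i)
    = (\<Sum>t<n. poly u (inverse (\<gamma> ^ (2 * t + 1))) * poly c (\<gamma> ^ (2 * t + 1)))"
proof -
  let ?\<omega> = "\<lambda>t. \<gamma> ^ (2 * t + 1)"
  have "(\<Sum>t<n. poly u (inverse (?\<omega> t)) * poly c (?\<omega> t))
      = (\<Sum>t<n. \<Sum>i<n. \<Sum>j<n. coeff u i * coeff c j * ((?\<omega> t) ^ j * inverse (?\<omega> t) ^ i))"
    unfolding poly_eq_sum_lessThan[OF assms(2)] poly_eq_sum_lessThan[OF assms(3)] sum_product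
    by (simp only: mult_ac)
  also have "\<dots> = (\<Sum>i<n. \<Sum>t<n. \<Sum>j<n. coeff u i * coeff c j * ((?\<omega> t) ^ j * inverse (?\<omega> t) ^ i))"
    by (rule sum.swap)
  also have "\<dots> = (\<Sum>i<n. \<Sum>j<n. \<Sum>t<n. coeff u i * coeff c j * ((?\<omega> t) ^ j * inverse (?\<omega> t) ^ i))"
    by (intro sum.cong refl sum.swap)
  also have "\<dots> = (\<Sum>i<n. \<Sum>j<n. coeff u i * coeff c j
      * (\<Sum>t<n. (?\<omega> t) ^ j * inverse (?\<omega> t) ^ i))"
    by (simp only: sum_distrib_left)
  also have "\<dots> = (\<Sum>i<n. \<Sum>j<n. if i = j then coeff u i * coeff c j * of_nat n else 0)"
  proof (intro sum.cong refl)
    fix i j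
    assume "i \<in> {..<n}" "j \<in> {..<n}"
    then show "coeff u i * coeff c j * (\<Sum>t<n. (?\<omega> t) ^ j * inverse (?\<omega> t) ^ i)
        = (if i = j then coeff u i * coeff c j * of_nat n else 0)"
      using negacyclic_orthogonality[OF prim, of i j] by simp
  qed
  also have "\<dots> = (\<Sum>i<n. coeff u i * coeff c i * of_nat n)"
    by simp
  finally show ?thesis
    by (simp add: sum_distrib_left mult_ac)
qed

section \<open>Primitive \<open>2(3\<^sup>l + 1)\<close>-th roots of unity in characteristic 3\<close>

locale ternary_negacyclic =
  fixes l n :: nat and \<gamma> :: "'b::field"
  assumes l_ge_2: "2 \<le> l" and n_eq: "n = 3 ^ l + 1" and char_3: "CHAR('b) = 3"
    and primitive: "primitive_root_unity (2 * n) \<gamma>"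
begin

sublocale emb: field_hom "gf3_emb :: gf3 \<Rightarrow> 'b"
  by (rule field_hom_gf3_emb[OF char_3])

sublocale emb_poly: map_poly_inj_idom_hom "gf3_emb :: gf3 \<Rightarrow> 'b" ..

abbreviation lift :: "gf3 poly \<Rightarrow> 'b poly" where
  "lift \<equiv> map_poly gf3_emb"

lemma double_l_less_n: "2 * l < n"
proof -
  have "2 * m + 1 \<le> (3::nat) ^ m" for m
    by (induction m) auto
  from this[of l] show ?thesis
    using n_eq by linarith
qed

lemma three_pow_less_n:
  assumes "m \<le> l"
  shows "(3::nat) ^ m < n"
proof -
  have "(3::nat) ^ m \<le> 3 ^ l"
    using assms by (simp add: power_increasing)
  then show ?thesis
    using n_eq by linarith
qed

lemma three_pow_mod_eq:
  assumes "j < 2 * l"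
  shows "(3::nat) ^ j mod (2 * n) = (if j < l then 3 ^ j else n - 3 ^ (j - l))"
proof (cases "j < l")
  case True
  then show ?thesis
    using three_pow_less_n[of j] by simp
next
  case False
  define m where "m = j - l"
  have "m < l" "j = l + m"
    using False assms by (auto simp: m_def)
  obtain k where k: "(3::nat) ^ m = 2 * k + 1"
    using oddE[of "(3::nat) ^ m"] by auto
  \<comment> \<open>\<open>3\<^sup>l = n - 1\<close>, so \<open>3\<^bsup>l+m\<^esup> = 3\<^sup>m n - 3\<^sup>m \<equiv> n - 3\<^sup>m (mod 2n)\<close> since \<open>3\<^sup>m\<close> is odd.\<close>
  have "(3::nat) ^ j = (n - 3 ^ m) + k * (2 * n)"
    using three_pow_less_n[of m] \<open>m < l\<close> k n_eq \<open>j = l + m\<close>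
    by (simp add: power_add algebra_simps)
  then have "(3::nat) ^ j mod (2 * n) = (n - 3 ^ m) mod (2 * n)"
    by (simp only: mod_mult_self1)
  moreover have "n - 3 ^ m < 2 * n"
    using double_l_less_n by linarith
  ultimately show ?thesis
    using False by (simp add: m_def)
qed

lemma three_pow_double_l_mod: "(3::nat) ^ (2 * l) mod (2 * n) = 1"
proof -
  obtain k where k: "(3::nat) ^ l = 2 * k + 1"
    using oddE[of "(3::nat) ^ l"] by auto
  have "(3::nat) ^ (2 * l) = (3 ^ l) ^ 2"
    by (metis power_mult mult.commute)
  also have "\<dots> = 1 + k * (2 * n)"
    using k n_eq by (simp add: power2_eq_square algebra_simps)
  finally have "(3::nat) ^ (2 * l) mod (2 * n) = 1 mod (2 * n)"
    by (simp only: mod_mult_self1)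
  moreover have "1 < 2 * n"
    using double_l_less_n by linarith
  ultimately show ?thesis
    by simp
qed

lemma three_pow_mod_le:
  assumes "j < 2 * l"
  shows "(3::nat) ^ j mod (2 * n) \<le> 3 ^ l"
proof (cases "j < l")
  case True
  then show ?thesis
    using three_pow_mod_eq[OF assms] by (simp add: power_increasing)
next
  case False
  have "(1::nat) \<le> 3 ^ (j - l)"
    by simp
  moreover have "(3::nat) ^ j mod (2 * n) = n - 3 ^ (j - l)"
    using three_pow_mod_eq[OF assms] False by simp
  ultimately show ?thesis
    using n_eq by linarith
qed

lemma inj_on_three_pow_mod: "inj_on (\<lambda>j. (3::nat) ^ j mod (2 * n)) {..<2 * l}"
proof -
  \<comment> \<open>Residues \<open>3\<^sup>j\<close> with \<open>j < l\<close> are at most \<open>3\<^bsup>l-1\<^esup>\<close>, the others exceed it.\<close>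
  have small: "(3::nat) ^ m \<le> 3 ^ (l - 1)" if "m < l" for m
    using that by (intro power_increasing) auto
  have n: "n = 3 * 3 ^ (l - 1) + 1"
    using n_eq l_ge_2 by (simp flip: power_Suc)
  have low_high: "(3::nat) ^ i \<noteq> n - 3 ^ (j - l)" if "i < l" "l \<le> j" "j < 2 * l" for i j
    using small[of i] small[of "j - l"] that n by linarith
  show ?thesis
  proof (rule inj_onI)
    fix i j
    assume "i \<in> {..<2 * l}" "j \<in> {..<2 * l}" and "(3::nat) ^ i mod (2 * n) = 3 ^ j mod (2 * n)"
    then have eq: "(if i < l then 3 ^ i else n - 3 ^ (i - l)) = (if j < l then 3 ^ j else n - (3::nat) ^ (j - l))"
      using three_pow_mod_eq by simp
    have "(3::nat) ^ (i - l) < n" "(3::nat) ^ (j - l) < n"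
      using \<open>i \<in> _\<close> \<open>j \<in> _\<close> by (auto intro: three_pow_less_n)
    consider "i < l" "j < l" | "i < l" "\<not> j < l" | "\<not> i < l" "j < l" | "\<not> i < l" "\<not> j < l"
      by blast
    then show "i = j"
    proof cases
      case 4
      then have "n - (3::nat) ^ (i - l) = n - 3 ^ (j - l)"
        using eq by simp
      then have "(3::nat) ^ (i - l) = 3 ^ (j - l)"
        using \<open>3 ^ (i - l) < n\<close> \<open>3 ^ (j - l) < n\<close> by linarith
      then show ?thesis
        using 4 by simp
    qed (use eq low_high[of i j] low_high[of j i] \<open>i \<in> _\<close> \<open>j \<in> _\<close> in auto)
  qed
qed

lemma odd_three_pow_mod: "odd ((3::nat) ^ j mod (2 * n))"
  by (simp add: dvd_mod_iff)

lemma three_pow_mod_4: "(3::nat) ^ k mod 4 = (if even k then 1 else 3)"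
proof (induction k)
  case (Suc k)
  have "(3::nat) ^ Suc k mod 4 = 3 * (3 ^ k mod 4) mod 4"
    by (simp add: mod_mult_right_eq)
  then show ?case
    using Suc by (auto split: if_splits)
qed simp

lemma n_mod_4: "n mod 4 = (if even l then 2 else 0)"
  using three_pow_mod_4[of l] n_eq by (auto simp: mod_Suc)

lemma gamma_nonzero: "\<gamma> \<noteq> 0"
  using primitive_root_unity_nonzero[OF primitive] n_eq by simp

lemma gamma_pow_eq_iff: "\<gamma> ^ a = \<gamma> ^ b \<longleftrightarrow> a mod (2 * n) = b mod (2 * n)"
  using primitive_root_unity_power_eq_iff[OF primitive] n_eq by simp

lemma gamma_pow_mod: "\<gamma> ^ a = \<gamma> ^ (a mod (2 * n))"
  by (rule primitive_root_unity_power_mod[OF primitive])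

lemma gamma_pow_n: "\<gamma> ^ n = -1"
  using primitive_root_unity_half_power[OF primitive] n_eq by simp

lemma gamma_pow_pow_2n: "(\<gamma> ^ k) ^ (2 * n) = 1"
  using primitive unfolding primitive_root_unity_def by (metis power_mult mult.commute power_one)

lemma signed_gamma_pow_eq_imp_eq:
  assumes "i < n" "j < n" "a = 1 \<or> a = -1" "b = 1 \<or> b = -1"
    and "a * \<gamma> ^ i = b * \<gamma> ^ j \<or> a * \<gamma> ^ i = - (b * \<gamma> ^ j)"
  shows "i = j"
proof -
  have "\<gamma> ^ i = \<gamma> ^ j \<or> \<gamma> ^ i = - (\<gamma> ^ j)"
    using assms(3-) by (auto simp: minus_equation_iff[of "\<gamma> ^ i"])
  then have "\<gamma> ^ i = \<gamma> ^ j \<or> \<gamma> ^ i = \<gamma> ^ (n + j)"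
    by (simp add: power_add gamma_pow_n)
  then show ?thesis
    using assms(1,2) by (auto simp: gamma_pow_eq_iff)
qed

lemma root_unity_eq_signed_gamma_pow:
  assumes "w ^ (2 * n) = 1"
  shows "\<exists>k<n. w = \<gamma> ^ k \<or> w = - (\<gamma> ^ k)"
proof -
  obtain k where "k < 2 * n" "w = \<gamma> ^ k"
    using root_unity_eq_primitive_power[OF primitive _ assms] n_eq by auto
  show ?thesis
  proof (cases "k < n")
    case False
    then have "w = \<gamma> ^ n * \<gamma> ^ (k - n)"
      using \<open>w = \<gamma> ^ k\<close> by (simp flip: power_add)
    then show ?thesis
      using False \<open>k < 2 * n\<close> by (intro exI[of _ "k - n"]) (auto simp: gamma_pow_n)
  qed (use \<open>w = \<gamma> ^ k\<close> in auto)
qed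

lemma gf3_emb_pow_three_pow [simp]: "(gf3_emb c :: 'b) ^ 3 ^ k = gf3_emb c"
  using finite_field_power_card_power_eq_same[of "3 ^ k" k c]
  by (simp add: card_tri flip: emb.hom_power)

lemma poly_lift_frobenius: "poly (lift p) (z ^ 3 ^ k) = poly (lift p) z ^ 3 ^ k"
proof -
  have "poly (lift p) z ^ 3 ^ k = (\<Sum>i\<le>degree p. (gf3_emb (coeff p i) * z ^ i) ^ 3 ^ k)"
    unfolding poly_altdef using char_3 by (simp add: freshmans_dream_sum')
  also have "\<dots> = poly (lift p) (z ^ 3 ^ k)"
    unfolding poly_altdef
    by (simp add: power_mult_distrib mult.commute[of _ "3 ^ k"] flip: power_mult)
  finally show ?thesis ..
qed

lemma even_n: "even n"
  using n_eq by simp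

lemma odd_half_n_if_even_l:
  assumes "even l"
  shows "odd (n div 2)"
proof -
  have "n mod 4 = 2"
    using n_mod_4 assms by simp
  then show ?thesis
    by presburger
qed

lemma pow_n_quadratic_identity:
  fixes x :: 'b
  shows "x ^ 2 + (1 + x ^ n - (1 + x) ^ n) * x + x ^ n = 0"
proof -
  \<comment> \<open>Frobenius: with \<open>q = 3\<^sup>l = n - 1\<close>, \<open>(1 + x)\<^sup>n = (1 + x\<^sup>q)(1 + x)\<close> and \<open>x\<^sup>n = x x\<^sup>q\<close>.\<close>
  define q where "q = (3::nat) ^ l"
  have "(1 + x) ^ q = 1 + x ^ q"
    unfolding q_def using char_3 freshmans_dream'[of "3 ^ l" l 1 x] by simp
  then have "(1 + x) ^ n = (1 + x ^ q) * (1 + x)" "x ^ n = x * x ^ q"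
    unfolding n_eq q_def by simp_all
  then show ?thesis
    by (simp add: power2_eq_square algebra_simps)
qed

lemma pow_n_eq_minus_1_if_square:
  fixes x :: 'b
  assumes "even l" "x ^ 2 = -1"
  shows "x ^ n = -1"
proof -
  have "x ^ n = x ^ (2 * (n div 2))"
    using even_n by simp
  also have "\<dots> = -1"
    using assms odd_half_n_if_even_l by (simp add: power_mult)
  finally show ?thesis .
qed

lemma pow_n_neq_minus_1_if_quadratic:
  fixes x t :: 'b
  assumes "even l" "t ^ 2 = 1" and quad: "x ^ 2 = t * x + 1"
  shows "x ^ n \<noteq> -1"
proof
  \<comment> \<open>\<open>x\<close> lies in \<open>GF(9)\<close> and \<open>3\<^sup>l\<close> is a power of 9, so \<open>x\<^sup>n = x\<^sup>2\<close>.\<close>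
  assume "x ^ n = -1"
  obtain h where "(3::nat) ^ l = 9 ^ h"
    using \<open>even l\<close> by (auto simp: power_mult elim!: evenE)
  then have "x ^ n = x * x"
    using pow_9_pow_eq_self_if_quadratic[OF char_3 assms(2,3), of h] n_eq by simp
  then have "x ^ 2 = -1"
    using \<open>x ^ n = -1\<close> by (simp add: power2_eq_square)
  have three: "(3::'b) = 0"
    using three_eq_0_if_CHAR_3[OF char_3] .
  have "t * x = - 2"
    using quad \<open>x ^ 2 = -1\<close> by (simp add: eq_neg_iff_add_eq_0 add.commute)
  have "x = t * (t * x)"
    using \<open>t ^ 2 = 1\<close> by (metis mult.assoc mult_1 power2_eq_square)
  also have "\<dots> = t + 3 * (- t)"
    using \<open>t * x = - 2\<close> by (simp add: algebra_simps)
  finally have "x ^ 2 = 1"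
    using three \<open>t ^ 2 = 1\<close> by simp
  then show False
    using \<open>x ^ 2 = -1\<close> one_neq_minus_one_if_CHAR_3[OF char_3] by simp
qed

lemma consecutive_roots_unity_eq_1:
  fixes x :: 'b
  assumes "even l" "x ^ (2 * n) = 1" "(1 + x) ^ (2 * n) = 1"
  shows "x = 1"
proof -
  define s where "s = x ^ n"
  define t where "t = (1 + x) ^ n"
  have "s ^ 2 = 1" "t ^ 2 = 1"
    using assms(2,3) unfolding s_def t_def by (simp_all add: power_even_eq)
  then have s: "s = 1 \<or> s = -1" and t: "t = 1 \<or> t = -1"
    by (simp_all add: power2_eq_1_iff)
  have key: "x ^ 2 + (1 + s - t) * x + s = 0"
    unfolding s_def t_def by (rule pow_n_quadratic_identity)
  have three: "(3::'b) = 0"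
    using three_eq_0_if_CHAR_3[OF char_3] .
  have "s = 1"
  proof (rule ccontr)
    assume "s \<noteq> 1"
    then have "x ^ 2 - (t * x + 1) = 0"
      using key s by (simp add: algebra_simps)
    then show False
      using pow_n_neq_minus_1_if_quadratic[OF \<open>even l\<close> \<open>t ^ 2 = 1\<close>] s \<open>s \<noteq> 1\<close>
      by (simp add: s_def)
  qed
  have "t = 1"
  proof (rule ccontr)
    assume "t \<noteq> 1"
    then have "x ^ 2 + 3 * x + 1 = 0"
      using key \<open>s = 1\<close> t by simp
    then have "x ^ 2 = -1"
      using three by (simp add: eq_neg_iff_add_eq_0)
    then show False
      using pow_n_eq_minus_1_if_square[OF \<open>even l\<close>] \<open>s = 1\<close> one_neq_minus_one_if_CHAR_3[OF char_3]
      by (simp add: s_def)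
  qed
  have "(x - 1) ^ 2 = (x ^ 2 + (1 + s - t) * x + s) - 3 * x"
    using \<open>s = 1\<close> \<open>t = 1\<close> by (simp add: power2_eq_square algebra_simps)
  then have "(x - 1) ^ 2 = 0"
    using key three by simp
  then show ?thesis
    by simp
qed

lemma three_roots_unity_sum_zero:
  fixes a b c :: 'b
  assumes "even l" and roots: "a ^ (2 * n) = 1" "b ^ (2 * n) = 1" "c ^ (2 * n) = 1"
    and sum: "a + b + c = 0"
  shows "a = b"
proof -
  have "0 < n"
    using double_l_less_n by linarith
  then have "a \<noteq> 0"
    using roots(1) by (cases "a = 0") (auto simp: power_0_left)
  have "a + b = - c"
    by (subst eq_neg_iff_add_eq_0) (rule sum)
  have "1 + b / a = (a + b) / a"
    using \<open>a \<noteq> 0\<close> by (simp add: field_simps)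
  also have "\<dots> = - c / a"
    using \<open>a + b = - c\<close> by simp
  finally have "(1 + b / a) ^ (2 * n) = 1"
    using roots(1,3) by (simp add: power_divide)
  moreover have "(b / a) ^ (2 * n) = 1"
    using roots(1,2) by (simp add: power_divide)
  ultimately have "b / a = 1"
    using consecutive_roots_unity_eq_1[OF \<open>even l\<close>] by blast
  then show ?thesis
    using \<open>a \<noteq> 0\<close> by simp
qed

definition conjugate_poly :: "'b poly" where
  "conjugate_poly = (\<Prod>j<2 * l. [:- (\<gamma> ^ 3 ^ j), 1:])"

lemma gamma_pow_three_pow_double_l: "\<gamma> ^ 3 ^ (2 * l) = \<gamma>"
  using gamma_pow_mod[of "3 ^ (2 * l)"] three_pow_double_l_mod by simp

lemma inj_on_conjugates: "inj_on (\<lambda>j. \<gamma> ^ 3 ^ j) {..<2 * l}"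
  using inj_on_three_pow_mod by (auto simp: inj_on_def gamma_pow_eq_iff)

lemma poly_conjugate_poly_eq_0_iff: "poly conjugate_poly z = 0 \<longleftrightarrow> (\<exists>j<2 * l. z = \<gamma> ^ 3 ^ j)"
  unfolding conjugate_poly_def poly_prod by auto

lemma degree_conjugate_poly: "degree conjugate_poly = 2 * l"
  unfolding conjugate_poly_def by (subst degree_prod_eq_sum_degree) auto

lemma lead_coeff_conjugate_poly: "lead_coeff conjugate_poly = 1"
  unfolding conjugate_poly_def lead_coeff_prod by simp

lemma coeff_conjugate_poly_cube: "coeff conjugate_poly i ^ 3 = coeff conjugate_poly i"
proof -
  interpret frob: comm_ring_hom "\<lambda>c::'b. c ^ 3"
    using char_3 by unfold_locales (simp_all add: freshmans_dream power_mult_distrib)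
  interpret frob_poly: map_poly_comm_ring_hom "\<lambda>c::'b. c ^ 3" ..
  define f where "f j = [:- (\<gamma> ^ 3 ^ j), 1:]" for j
  \<comment> \<open>Cubing the coefficients shifts the factors cyclically, as \<open>\<gamma>\<^bsup>3\<^bsup>2l\<^esup>\<^esup> = \<gamma>\<close>.\<close>
  have "map_poly (\<lambda>c. c ^ 3) conjugate_poly = (\<Prod>j<2 * l. f (Suc j))"
    unfolding conjugate_poly_def frob_poly.hom_prod f_def
    by (intro prod.cong refl) (simp add: mult.commute flip: power_mult)
  also have "\<dots> = (\<Prod>j<2 * l. f j)"
  proof -
    have "f (2 * l) = f 0"
      unfolding f_def using gamma_pow_three_pow_double_l by simp
    moreover have "f 0 \<noteq> 0"
      unfolding f_def by simp
    ultimately show ?thesis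
      using prod.lessThan_Suc_shift[of f "2 * l"] prod.lessThan_Suc[of f "2 * l"]
      by (simp add: mult.commute)
  qed
  finally have "map_poly (\<lambda>c. c ^ 3) conjugate_poly = conjugate_poly"
    unfolding conjugate_poly_def f_def .
  then show ?thesis
    by (metis coeff_map_poly frob.hom_zero)
qed

definition gamma_min_poly :: "gf3 poly" where
  "gamma_min_poly = map_poly (inv_into UNIV (gf3_emb :: gf3 \<Rightarrow> 'b)) conjugate_poly"

lemma lift_gamma_min_poly: "lift gamma_min_poly = conjugate_poly"
proof (rule poly_eqI)
  fix i
  have "coeff conjugate_poly i \<in> range (gf3_emb :: gf3 \<Rightarrow> 'b)"
    using coeff_conjugate_poly_cube[of i] unfolding cube_eq_self_iff
    by (metis emb.hom_zero emb.hom_one emb.hom_uminus rangeI)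
  moreover have "inv_into UNIV (gf3_emb :: gf3 \<Rightarrow> 'b) 0 = 0"
    using emb.inv_f_f[of 0] by simp
  ultimately show "coeff (lift gamma_min_poly) i = coeff conjugate_poly i"
    by (simp add: gamma_min_poly_def coeff_map_poly f_inv_into_f)
qed

lemma conjugates_are_roots:
  assumes "poly (lift p) \<gamma> = 0"
  shows "poly (lift p) (\<gamma> ^ 3 ^ j) = 0"
  using assms by (simp add: poly_lift_frobenius)

lemma degree_ge_if_root_gamma:
  assumes "p \<noteq> 0" "poly (lift p) \<gamma> = 0"
  shows "2 * l \<le> degree p"
proof -
  have "card ((\<lambda>j. \<gamma> ^ 3 ^ j) ` {..<2 * l}) \<le> degree (lift p)"
    using assms conjugates_are_roots by (intro card_roots_le_degree) auto
  then show ?thesis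
    by (simp add: card_image[OF inj_on_conjugates])
qed

lemma is_min_poly_gamma_min_poly: "is_min_poly_GF3 \<gamma> gamma_min_poly"
proof -
  have "degree gamma_min_poly = 2 * l"
    using degree_conjugate_poly by (simp flip: lift_gamma_min_poly)
  moreover have "lead_coeff gamma_min_poly = 1"
  proof -
    have "gf3_emb (lead_coeff gamma_min_poly) = (lead_coeff (lift gamma_min_poly) :: 'b)"
      by simp
    then show ?thesis
      using lead_coeff_conjugate_poly by (simp add: lift_gamma_min_poly)
  qed
  moreover have "poly (lift gamma_min_poly) \<gamma> = 0"
    unfolding lift_gamma_min_poly poly_conjugate_poly_eq_0_iff using l_ge_2
    by (intro exI[of _ 0]) auto
  ultimately show ?thesis
    unfolding is_min_poly_GF3_def using degree_ge_if_root_gamma by auto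
qed

lemma min_poly_dvd:
  assumes min: "is_min_poly_GF3 \<gamma> M" and root: "poly (lift p) \<gamma> = 0"
  shows "M dvd p"
proof (rule ccontr)
  assume "\<not> M dvd p"
  then have "p mod M \<noteq> 0"
    by (simp add: mod_eq_0_iff_dvd)
  have "M \<noteq> 0" and "poly (lift M) \<gamma> = 0"
    using min unfolding is_min_poly_GF3_def by auto
  have "p mod M = p - p div M * M"
    by (simp add: minus_div_mult_eq_mod)
  then have "poly (lift (p mod M)) \<gamma> = 0"
    using root \<open>poly (lift M) \<gamma> = 0\<close> by (simp add: emb_poly.hom_minus emb_poly.hom_mult)
  then have "degree M \<le> degree (p mod M)"
    using min \<open>p mod M \<noteq> 0\<close> unfolding is_min_poly_GF3_def by blast
  moreover have "degree (p mod M) < degree M"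
    using degree_mod_less'[OF \<open>M \<noteq> 0\<close> \<open>p mod M \<noteq> 0\<close>] .
  ultimately show False
    by simp
qed

lemma min_poly_eq:
  assumes "is_min_poly_GF3 \<gamma> M"
  shows "M = gamma_min_poly"
  using assms is_min_poly_gamma_min_poly
  by (intro poly_dvd_antisym min_poly_dvd) (auto simp: is_min_poly_GF3_def)

lemma lift_min_poly: "is_min_poly_GF3 \<gamma> M \<Longrightarrow> lift M = conjugate_poly"
  using min_poly_eq lift_gamma_min_poly by simp

lemma degree_min_poly:
  assumes "is_min_poly_GF3 \<gamma> M"
  shows "degree M = 2 * l"
proof -
  have "degree (lift M) = 2 * l"
    using lift_min_poly[OF assms] degree_conjugate_poly by simp
  then show ?thesis
    by simp
qed

lemma min_poly_nonzero: "is_min_poly_GF3 \<gamma> M \<Longrightarrow> M \<noteq> 0"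
  unfolding is_min_poly_GF3_def by auto

lemma poly_lift_eq_sum_support:
  assumes "degree v < n"
  shows "poly (lift v) z = (\<Sum>i\<in>{i. i < n \<and> coeff v i \<noteq> 0}. gf3_emb (coeff v i) * z ^ i)"
  using poly_eq_sum_support[of "lift v" n z] assms by (simp add: coeff_map_poly)

definition vanishing_code :: "gf3 poly set" where
  "vanishing_code = {v. degree v < n \<and> poly (lift v) \<gamma> = 0}"

lemma vanishing_code_eq_multiples: "vanishing_code = {v. degree v < n \<and> gamma_min_poly dvd v}"
proof -
  have "poly (lift v) \<gamma> = 0 \<longleftrightarrow> gamma_min_poly dvd v" for v
    using min_poly_dvd[OF is_min_poly_gamma_min_poly] is_min_poly_gamma_min_poly
    by (auto simp: is_min_poly_GF3_def emb_poly.hom_mult)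
  then show ?thesis
    unfolding vanishing_code_def by blast
qed

lemma code_dim_vanishing_code: "code_dim vanishing_code = n - 2 * l"
  using dim_multiples_degree_less[of gamma_min_poly n] double_l_less_n
    min_poly_nonzero[OF is_min_poly_gamma_min_poly] degree_min_poly[OF is_min_poly_gamma_min_poly]
  unfolding code_dim_def vanishing_code_eq_multiples by simp

lemma vanishing_code_diff: "c \<in> vanishing_code \<Longrightarrow> c' \<in> vanishing_code \<Longrightarrow> c - c' \<in> vanishing_code"
  unfolding vanishing_code_def by (auto intro: degree_diff_less simp: emb_poly.hom_minus)

lemma zero_in_vanishing_code: "0 \<in> vanishing_code"
  unfolding vanishing_code_def using double_l_less_n by simp

lemma card_signed_gamma_relation_ge:
  assumes "finite S" "S \<subseteq> {..<n}" "S \<noteq> {}"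
    and sign: "\<And>i. i \<in> S \<Longrightarrow> e i = 1 \<or> e i = -1"
    and sum: "(\<Sum>i\<in>S. e i * \<gamma> ^ i) = 0"
  shows "(if odd l then 3 else 4) \<le> card S"
proof -
  define a where "a i = e i * \<gamma> ^ i" for i
  have nonzero: "a i \<noteq> 0" if "i \<in> S" for i
    using sign[OF that] gamma_nonzero by (auto simp: a_def)
  have root: "a i ^ (2 * n) = 1" if "i \<in> S" for i
    using sign[OF that] gamma_pow_pow_2n[of i] by (auto simp: a_def power_mult_distrib)
  have distinct: "i = j" if "i \<in> S" "j \<in> S" "a i = a j \<or> a i = - a j" for i j
    using signed_gamma_pow_eq_imp_eq[OF _ _ sign[OF that(1)] sign[OF that(2)]] that assms(2)
    by (auto simp: a_def)
  have "card S \<noteq> 0"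
    using assms(1,3) by auto
  moreover have "card S \<noteq> 1"
  proof
    assume "card S = 1"
    then obtain i where "S = {i}"
      by (auto simp: card_1_singleton_iff)
    then show False
      using sum nonzero by (simp add: a_def)
  qed
  moreover have "card S \<noteq> 2"
  proof
    assume "card S = 2"
    then obtain i j where "S = {i, j}" "i \<noteq> j"
      by (auto simp: card_2_iff)
    then have "a i = - a j"
      using sum by (simp add: a_def eq_neg_iff_add_eq_0)
    then show False
      using distinct[of i j] \<open>S = {i, j}\<close> \<open>i \<noteq> j\<close> by simp
  qed
  moreover have "card S \<noteq> 3" if "even l"
  proof
    assume "card S = 3"
    then obtain i j k where "S = {i, j, k}" "i \<noteq> j" "j \<noteq> k" "i \<noteq> k"
      by (auto simp: card_3_iff)
    then have "a i + a j + a k = 0"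
      using sum by (simp add: a_def add.assoc)
    moreover have "a i ^ (2 * n) = 1" "a j ^ (2 * n) = 1" "a k ^ (2 * n) = 1"
      using root \<open>S = {i, j, k}\<close> by auto
    ultimately have "a i = a j"
      using three_roots_unity_sum_zero[OF that] by blast
    then show False
      using distinct[of i j] \<open>S = {i, j, k}\<close> \<open>i \<noteq> j\<close> by simp
  qed
  ultimately show ?thesis
    by auto
qed

lemma vanishing_code_hweight_ge:
  assumes "v \<in> vanishing_code" "v \<noteq> 0"
  shows "(if odd l then 3 else 4) \<le> hweight n v"
proof -
  define S where "S = {i. i < n \<and> coeff v i \<noteq> 0}"
  have "degree v < n" "poly (lift v) \<gamma> = 0"
    using assms(1) unfolding vanishing_code_def by simp_all
  then have "(\<Sum>i\<in>S. gf3_emb (coeff v i) * \<gamma> ^ i) = 0"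
    by (simp add: S_def poly_lift_eq_sum_support)
  moreover have "gf3_emb (coeff v i) = (1::'b) \<or> gf3_emb (coeff v i) = (-1::'b)" if "i \<in> S" for i
    using gf3_cases[of "coeff v i"] that by (auto simp: S_def emb.hom_uminus)
  moreover have "degree v \<in> S"
    using assms(2) \<open>degree v < n\<close> by (simp add: S_def)
  ultimately have "(if odd l then 3 else 4) \<le> card S"
    by (intro card_signed_gamma_relation_ge) (auto simp: S_def)
  then show ?thesis
    by (simp add: hweight_def S_def)
qed

lemma two_term_collision:
  obtains i j i' j' where "i < n" "j < n" "i' < n" "j' < n" "(i, j) \<noteq> (i', j')"
    and "gamma_min_poly dvd two_term i j - two_term i' j'"
proof -
  let ?pairs = "{..<n} \<times> {..<n}"
  let ?residue = "\<lambda>(i, j). two_term i j mod gamma_min_poly"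
  let ?R = "{r :: gf3 poly. degree r < 2 * l}"
  \<comment> \<open>Pigeonhole: there are \<open>n\<^sup>2\<close> two-term words but only \<open>3\<^bsup>2l\<^esup> < n\<^sup>2\<close> residues.\<close>
  have "?residue ` ?pairs \<subseteq> ?R"
  proof clarify
    fix i j
    have "gamma_min_poly \<noteq> 0" "degree gamma_min_poly = 2 * l"
      using min_poly_nonzero degree_min_poly is_min_poly_gamma_min_poly by auto
    then show "degree (two_term i j mod gamma_min_poly) < 2 * l"
      using degree_mod_less'[of gamma_min_poly "two_term i j"] l_ge_2
      by (cases "two_term i j mod gamma_min_poly = 0") auto
  qed
  moreover have "card ?R = 3 ^ (2 * l)"
    using card_polys_degree_less[where 'a=gf3, of "2 * l"] l_ge_2 by (simp add: card_tri)
  moreover have "(3::nat) ^ (2 * l) < card ?pairs"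
  proof -
    have "(3::nat) ^ (2 * l) = 3 ^ l * 3 ^ l"
      by (simp add: mult_2 power_add)
    also have "\<dots> < n * n"
      unfolding n_eq by (intro mult_strict_mono) auto
    finally show ?thesis
      by (simp add: card_cartesian_product)
  qed
  ultimately have "\<not> inj_on ?residue ?pairs"
    using card_inj_on_le[of ?residue ?pairs ?R] card_ge_0_finite[of ?R] by fastforce
  then show thesis
    using that unfolding inj_on_def by (auto simp: mod_eq_dvd_iff)
qed

lemma vanishing_code_hweight_le_4: "\<exists>v\<in>vanishing_code. v \<noteq> 0 \<and> hweight n v \<le> 4"
proof -
  obtain i j i' j' where ij: "i < n" "j < n" "i' < n" "j' < n" "(i, j) \<noteq> (i', j')"
    and "gamma_min_poly dvd two_term i j - two_term i' j'"
    by (rule two_term_collision)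
  define d where "d = two_term i j - two_term i' j'"
  have "degree d < n"
    using ij by (simp add: d_def degree_diff_less degree_two_term_less)
  moreover have "d \<noteq> 0"
    using ij(5) by (simp add: d_def two_term_eq_iff)
  moreover have "hweight n d \<le> 4"
  proof -
    have "coeff d p = 0" if "p \<notin> {i, j, i', j'}" for p
    proof -
      have "coeff (two_term i j) p = 0" "coeff (two_term i' j') p = 0"
        using support_two_term[of i j] support_two_term[of i' j'] that by blast+
      then show ?thesis
        by (simp add: d_def)
    qed
    then have "hweight n d \<le> card {i, j, i', j'}"
      unfolding hweight_def by (intro card_mono) auto
    also have "\<dots> \<le> 4"
      by (simp add: card_insert_if)
    finally show ?thesis .
  qed
  ultimately show ?thesis
    using \<open>gamma_min_poly dvd _\<close> by (auto simp: vanishing_code_eq_multiples d_def)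
qed

lemma square_gamma_pow_half_n: "(\<gamma> ^ (n div 2)) ^ 2 = -1"
proof -
  have "(\<gamma> ^ (n div 2)) ^ 2 = \<gamma> ^ (2 * (n div 2))"
    by (simp add: power_even_eq)
  also have "\<dots> = \<gamma> ^ n"
    using even_n by simp
  finally show ?thesis
    by (simp add: gamma_pow_n)
qed

lemma root_unity_one_plus_gamma_pow_half_n:
  assumes "odd l"
  shows "(- (1 + \<gamma> ^ (n div 2))) ^ (2 * n) = 1"
proof -
  \<comment> \<open>With \<open>i\<^sup>2 = -1\<close>: \<open>(1 + i)\<^sup>2 = 2i = -i\<close>, so \<open>1 + i\<close> is an 8th root of unity, and \<open>8\<close> divides \<open>2n\<close>.\<close>
  define i where "i = \<gamma> ^ (n div 2)"
  have "n mod 4 = 0"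
    using n_mod_4 assms by simp
  then have n_quarter: "2 * n = 8 * (n div 4)"
    by presburger
  have "(1 + i) ^ 2 = (1 + i ^ 2) + 3 * i - i"
    by (simp add: power2_eq_square algebra_simps)
  then have "(1 + i) ^ 2 = - i"
    using square_gamma_pow_half_n three_eq_0_if_CHAR_3[OF char_3] by (simp add: i_def)
  have "(1 + i) ^ 8 = ((1 + i) ^ 2) ^ 4"
    by (simp flip: power_mult)
  also have "\<dots> = (i ^ 2) ^ 2"
    using \<open>(1 + i) ^ 2 = - i\<close> by (simp flip: power_mult)
  finally have "(1 + i) ^ 8 = 1"
    using square_gamma_pow_half_n by (simp add: i_def)
  then have "(1 + i) ^ (2 * n) = 1"
    unfolding n_quarter by (simp add: power_mult)
  then show ?thesis
    unfolding i_def by (metis power_minus_even dvd_triv_left)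
qed

lemma minus_one_plus_gamma_pow_half_n_notin:
  "- (1 + \<gamma> ^ (n div 2)) \<notin> {1, -1, \<gamma> ^ (n div 2), - (\<gamma> ^ (n div 2))}"
proof -
  define i where "i = \<gamma> ^ (n div 2)"
  have three: "(3::'b) = 0"
    using three_eq_0_if_CHAR_3[OF char_3] .
  have i2: "i ^ 2 = -1" and "1 \<noteq> (-1::'b)"
    using square_gamma_pow_half_n one_neq_minus_one_if_CHAR_3[OF char_3] by (simp_all add: i_def)
  have "- (1 + i) \<noteq> 1 \<and> - (1 + i) \<noteq> -1"
  proof -
    have "- (1 + i) = 1 \<or> - (1 + i) = -1 \<Longrightarrow> i = 0 \<or> i = 1 + 3 * (-1)"
      by (auto simp: algebra_simps eq_neg_iff_add_eq_0)
    then show ?thesis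
      using i2 three \<open>1 \<noteq> -1\<close> by auto
  qed
  moreover have "- (1 + i) \<noteq> i \<and> - (1 + i) \<noteq> - i"
  proof -
    have "i + i + 1 \<noteq> 0"
    proof
      assume "i + i + 1 = 0"
      moreover have "i = 1 + 3 * i - (i + i + 1)"
        by (simp add: algebra_simps)
      ultimately have "i = 1"
        using three by simp
      then show False
        using i2 \<open>1 \<noteq> -1\<close> by simp
    qed
    moreover have "- (1 + i) = i \<or> - (1 + i) = - i \<Longrightarrow> i + i + 1 = 0"
      by (auto simp: algebra_simps neg_eq_iff_add_eq_0)
    ultimately show ?thesis
      by blast
  qed
  ultimately show ?thesis
    by (simp add: i_def)
qed

lemma odd_l_three_term_relation:
  assumes "odd l"
  obtains k c where "k < n" "k \<noteq> 0" "k \<noteq> n div 2" "c \<noteq> 0"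
    and "1 + \<gamma> ^ (n div 2) + gf3_emb c * \<gamma> ^ k = 0"
proof -
  define i where "i = \<gamma> ^ (n div 2)"
  obtain k where "k < n" and k: "- (1 + i) = \<gamma> ^ k \<or> - (1 + i) = - (\<gamma> ^ k)"
    using root_unity_eq_signed_gamma_pow root_unity_one_plus_gamma_pow_half_n[OF assms]
    unfolding i_def by blast
  define c :: gf3 where "c = (if - (1 + i) = \<gamma> ^ k then 1 else -1)"
  have "c \<noteq> 0"
    by (simp add: c_def)
  have relation: "1 + i + gf3_emb c * \<gamma> ^ k = 0"
  proof (cases "- (1 + i) = \<gamma> ^ k")
    case True
    then show ?thesis
      using True[symmetric] by (simp add: c_def)
  next
    case False
    then have "\<gamma> ^ k = 1 + i"
      using k by (metis neg_equal_iff_equal)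
    then show ?thesis
      using False by (simp add: c_def emb.hom_uminus)
  qed
  have "k \<noteq> 0"
  proof
    assume "k = 0"
    then have "- (1 + i) = 1 \<or> - (1 + i) = -1"
      using k by simp
    then show False
      using minus_one_plus_gamma_pow_half_n_notin[folded i_def] by blast
  qed
  moreover have "k \<noteq> n div 2"
  proof
    assume "k = n div 2"
    then have "- (1 + i) = i \<or> - (1 + i) = - i"
      using k by (simp add: i_def)
    then show False
      using minus_one_plus_gamma_pow_half_n_notin[folded i_def] by blast
  qed
  ultimately show thesis
    using that \<open>k < n\<close> \<open>c \<noteq> 0\<close> relation unfolding i_def by blast
qed

lemma vanishing_code_hweight_3:
  assumes "odd l"
  shows "\<exists>v\<in>vanishing_code. v \<noteq> 0 \<and> hweight n v = 3"
proof -
  obtain k c where k: "k < n" "k \<noteq> 0" "k \<noteq> n div 2" "c \<noteq> 0"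
    and relation: "1 + \<gamma> ^ (n div 2) + gf3_emb c * \<gamma> ^ k = 0"
    using odd_l_three_term_relation[OF assms] by blast
  define v where "v = monom 1 0 + monom 1 (n div 2) + monom c k"
  have "0 < n div 2" "n div 2 < n"
    using double_l_less_n l_ge_2 by auto
  then have coeff_v: "coeff v p = (if p \<in> {0, n div 2} then 1 else if p = k then c else 0)" for p
    using k by (auto simp: v_def)
  then have "{p. p < n \<and> coeff v p \<noteq> 0} = {0, n div 2, k}"
    using k \<open>n div 2 < n\<close> by auto
  then have "hweight n v = 3"
    using k \<open>0 < n div 2\<close> by (simp add: hweight_def)
  moreover have "v \<noteq> 0"
    using coeff_v[of 0] by auto
  moreover have "degree v < n"
    unfolding v_def using k \<open>n div 2 < n\<close>
    by (intro degree_add_less) (auto intro: le_less_trans[OF degree_monom_le])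
  moreover have "poly (lift v) \<gamma> = 0"
    using relation by (simp add: v_def emb_poly.hom_add poly_monom)
  ultimately show ?thesis
    unfolding vanishing_code_def by blast
qed

lemma min_dist_vanishing_code: "min_dist n vanishing_code = (if odd l then 3 else 4)"
proof -
  obtain v where "v \<in> vanishing_code" "v \<noteq> 0" "hweight n v = (if odd l then 3 else 4)"
    using vanishing_code_hweight_3 vanishing_code_hweight_le_4 vanishing_code_hweight_ge
    by (cases "odd l") (fastforce, force)
  then show ?thesis
    using vanishing_code_hweight_ge
    by (intro min_dist_eqI[OF vanishing_code_diff zero_in_vanishing_code]) auto
qed

lemma inj_on_odd_powers: "inj_on (\<lambda>t. \<gamma> ^ (2 * t + 1)) {..<n}"
proof (rule inj_onI)
  fix s t
  assume "s \<in> {..<n}" "t \<in> {..<n}" "\<gamma> ^ (2 * s + 1) = \<gamma> ^ (2 * t + 1)"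
  then show "s = t"
    by (simp only: gamma_pow_eq_iff) simp
qed

lemma conjugates_subset_odd_powers: "(\<lambda>j. \<gamma> ^ 3 ^ j) ` {..<2 * l} \<subseteq> (\<lambda>t. \<gamma> ^ (2 * t + 1)) ` {..<n}"
proof clarify
  fix j
  obtain t where t: "3 ^ j mod (2 * n) = 2 * t + 1"
    using odd_three_pow_mod[of j] by (auto elim: oddE)
  moreover have "3 ^ j mod (2 * n) < 2 * n"
    using double_l_less_n by simp
  ultimately have "t < n"
    by simp
  moreover have "\<gamma> ^ 3 ^ j = \<gamma> ^ (2 * t + 1)"
    using gamma_pow_mod[of "3 ^ j"] t by simp
  ultimately show "\<gamma> ^ 3 ^ j \<in> (\<lambda>t. \<gamma> ^ (2 * t + 1)) ` {..<n}"
    by blast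
qed

lemma of_nat_n_eq_1: "(of_nat n :: 'b) = 1"
  using n_eq l_ge_2 three_eq_0_if_CHAR_3[OF char_3] by simp

lemma trace_form_nondegenerate:
  assumes "w \<noteq> 0"
  obtains b where "degree b < 2 * l" "(\<Sum>j<2 * l. (w * poly (lift b) \<gamma>) ^ 3 ^ j) \<noteq> 0"
proof -
  \<comment> \<open>Otherwise the trace polynomial, of degree \<open>3\<^bsup>2l-1\<^esup>\<close>, would vanish on \<open>3\<^bsup>2l\<^esup>\<close> distinct values.\<close>
  define T :: "'b poly" where "T = (\<Sum>j<2 * l. monom 1 (3 ^ j))"
  let ?B = "{b :: gf3 poly. degree b < 2 * l}"
  assume no_b: "\<And>b. degree b < 2 * l \<Longrightarrow> (\<Sum>j<2 * l. (w * poly (lift b) \<gamma>) ^ 3 ^ j) \<noteq> 0 \<Longrightarrow> thesis"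
  have "coeff T 1 = 1"
    using l_ge_2 by (simp add: T_def coeff_sum cong: if_cong)
  then have "T \<noteq> 0"
    by auto
  have "degree T \<le> 3 ^ (2 * l - 1)"
    unfolding T_def by (intro degree_sum_le) (auto simp: degree_monom_eq intro!: power_increasing)
  show thesis
  proof (rule ccontr)
    assume "\<not> thesis"
    then have "(\<lambda>b. w * poly (lift b) \<gamma>) ` ?B \<subseteq> {y. poly T y = 0}"
      using no_b by (auto simp: T_def poly_sum poly_monom)
    moreover have "inj_on (\<lambda>b. w * poly (lift b) \<gamma>) ?B"
    proof (rule inj_onI)
      fix b b' assume "b \<in> ?B" "b' \<in> ?B" "w * poly (lift b) \<gamma> = w * poly (lift b') \<gamma>"
      then have "poly (lift (b - b')) \<gamma> = 0" "degree (b - b') < 2 * l"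
        using assms by (auto simp: emb_poly.hom_minus intro: degree_diff_less)
      then show "b = b'"
        using degree_ge_if_root_gamma[of "b - b'"] by fastforce
    qed
    ultimately have "card ?B \<le> degree T"
      using card_roots_le_degree[OF \<open>T \<noteq> 0\<close>] card_image by metis
    moreover have "card ?B = 3 ^ (2 * l)"
      using card_polys_degree_less[where 'a=gf3, of "2 * l"] l_ge_2 by (simp add: card_tri)
    moreover have "(3::nat) ^ (2 * l - 1) < 3 ^ (2 * l)"
      using l_ge_2 by (intro power_strict_increasing) auto
    ultimately show False
      using \<open>degree T \<le> 3 ^ (2 * l - 1)\<close> by simp
  qed
qed

end

section \<open>The code \<open>\<C>(l)\<close> and its dual\<close>

locale ternary_negacyclic_code = ternary_negacyclic +
  fixes M :: "gf3 poly"
  assumes min_poly: "is_min_poly_GF3 \<gamma> M"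
begin

definition generator :: "gf3 poly" where
  "generator = (monom 1 n + 1) div M"

lemma min_poly_dvd_xn_plus_1: "M dvd monom 1 n + 1"
  using min_poly_dvd[OF min_poly] by (simp add: emb_poly.hom_add poly_monom gamma_pow_n)

lemma xn_plus_1_eq: "monom 1 n + 1 = M * generator"
  unfolding generator_def using min_poly_dvd_xn_plus_1 by simp

lemma code_eq_multiples: "negacyclic_code n M = {v. degree v < n \<and> generator dvd v}"
  unfolding generator_def using negacyclic_code_eq_multiples[OF _ min_poly_dvd_xn_plus_1] double_l_less_n
  by simp

lemma code_dim: "code_dim (negacyclic_code n M) = 2 * l"
  using code_dim_negacyclic_code[OF _ min_poly_dvd_xn_plus_1] double_l_less_n degree_min_poly[OF min_poly]
  by simp

lemma code_diff: "c \<in> negacyclic_code n M \<Longrightarrow> c' \<in> negacyclic_code n M \<Longrightarrow> c - c' \<in> negacyclic_code n M"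
  unfolding code_eq_multiples by (auto intro: degree_diff_less dvd_diff)

lemma zero_in_code: "0 \<in> negacyclic_code n M"
  unfolding code_eq_multiples using double_l_less_n by simp

lemma generator_nonzero: "generator \<noteq> 0"
  using xn_plus_1_eq double_l_less_n by (metis degree_0 degree_1 degree_add_eq_left degree_monom_eq
      mult_zero_right not_less_zero one_neq_zero zero_less_iff_neq_zero)

lemma degree_generator: "degree generator = n - 2 * l"
proof -
  have "degree (monom 1 n + 1 :: gf3 poly) = n"
    using double_l_less_n by (simp add: degree_add_eq_left degree_monom_eq)
  then show ?thesis
    using xn_plus_1_eq degree_min_poly[OF min_poly] min_poly_nonzero[OF min_poly] generator_nonzero
    by (metis add_diff_cancel_left' degree_mult_eq)
qed

lemma code_vanishes_at_nonconjugate: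
  assumes "c \<in> negacyclic_code n M" "odd e" and not_conj: "\<forall>j<2 * l. \<gamma> ^ e \<noteq> \<gamma> ^ 3 ^ j"
  shows "poly (lift c) (\<gamma> ^ e) = 0"
proof -
  \<comment> \<open>Odd powers of \<open>\<gamma>\<close> are the roots of \<open>x\<^sup>n + 1\<close>; those of \<open>M\<close> are the conjugates only.\<close>
  have "(\<gamma> ^ e) ^ n = (\<gamma> ^ n) ^ e"
    by (simp flip: power_mult add: mult.commute)
  then have "poly (lift (monom 1 n + 1)) (\<gamma> ^ e) = 0"
    using \<open>odd e\<close> by (simp add: emb_poly.hom_add poly_monom gamma_pow_n)
  then have "poly (lift M) (\<gamma> ^ e) * poly (lift generator) (\<gamma> ^ e) = 0"
    by (simp add: xn_plus_1_eq emb_poly.hom_mult)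
  moreover have "poly (lift M) (\<gamma> ^ e) \<noteq> 0"
    using not_conj by (simp add: lift_min_poly[OF min_poly] poly_conjugate_poly_eq_0_iff)
  moreover obtain w where "c = generator * w"
    using assms(1) by (auto simp: code_eq_multiples dvd_def)
  ultimately show ?thesis
    by (simp add: emb_poly.hom_mult)
qed

lemma code_hweight_ge:
  assumes "c \<in> negacyclic_code n M" "c \<noteq> 0"
  shows "3 ^ l + 3 \<le> 2 * hweight n c"
proof -
  have "degree c < n"
    using assms(1) by (simp add: code_eq_multiples)
  \<comment> \<open>BCH bound: \<open>c\<close> vanishes at the \<open>(3\<^sup>l + 1)/2\<close> consecutive odd powers \<open>\<gamma>\<^bsup>3\<^sup>l+2\<^esup>, \<gamma>\<^bsup>3\<^sup>l+4\<^esup>, \<dots>, \<gamma>\<^bsup>2n-1\<^esup>\<close>.\<close>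
  have "(3 ^ l + 1) div 2 < card {i. i < n \<and> coeff (lift c) i \<noteq> 0}"
  proof (rule bch_bound)
    show "lift c \<noteq> 0" "degree (lift c) < n" "\<gamma> ^ (3 ^ l + 2) \<noteq> 0"
      using assms(2) \<open>degree c < n\<close> gamma_nonzero by simp_all
    show "inj_on (\<lambda>i. (\<gamma> ^ 2) ^ i) {..<n}"
      by (rule inj_onI) (simp add: gamma_pow_eq_iff flip: power_mult)
    fix k :: nat
    assume "k < (3 ^ l + 1) div 2"
    define e :: nat where "e = 3 ^ l + 2 + 2 * k"
    have "odd ((3::nat) ^ l)"
      by simp
    then have "2 * k < 3 ^ l"
      using \<open>k < (3 ^ l + 1) div 2\<close> by presburger
    then have "e < 2 * n" "3 ^ l < e"
      using n_eq by (auto simp: e_def)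
    have "\<gamma> ^ e \<noteq> \<gamma> ^ 3 ^ j" if "j < 2 * l" for j
      using three_pow_mod_le[OF that] \<open>e < 2 * n\<close> \<open>3 ^ l < e\<close> by (auto simp: gamma_pow_eq_iff)
    then have "poly (lift c) (\<gamma> ^ e) = 0"
      using assms(1) by (intro code_vanishes_at_nonconjugate) (auto simp: e_def)
    moreover have "\<gamma> ^ (3 ^ l + 2) * (\<gamma> ^ 2) ^ k = \<gamma> ^ e"
      by (simp add: e_def power_add power_mult)
    ultimately show "poly (lift c) (\<gamma> ^ (3 ^ l + 2) * (\<gamma> ^ 2) ^ k) = 0"
      by simp
  qed
  moreover have "odd ((3::nat) ^ l)"
    by simp
  ultimately show ?thesis
    unfolding hweight_def by (simp add: coeff_map_poly)
qed

lemma min_dist_code_ge: "3 ^ l + 3 \<le> 2 * min_dist n (negacyclic_code n M)"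
proof -
  have "generator \<in> negacyclic_code n M"
    using degree_generator double_l_less_n l_ge_2 by (simp add: code_eq_multiples)
  then have "(3 ^ l + 3) div 2 \<le> min_dist n (negacyclic_code n M)"
    using code_hweight_ge generator_nonzero
    by (intro min_dist_ge_if_hweight_ge[OF code_diff zero_in_code]) fastforce+
  moreover have "odd ((3::nat) ^ l)"
    by simp
  ultimately show ?thesis
    by presburger
qed

lemma poly_lift_generator_gamma_nonzero: "poly (lift generator) \<gamma> \<noteq> 0"
proof
  \<comment> \<open>\<open>x\<^sup>n + 1\<close> is separable: its derivative is \<open>n x\<^bsup>n-1\<^esup> = x\<^bsup>n-1\<^esup>\<close> as \<open>n \<equiv> 1 (mod 3)\<close>.\<close>
  assume "poly (lift generator) \<gamma> = 0"
  have "(of_nat n :: gf3) = 1"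
    using n_eq l_ge_2 three_eq_0_if_CHAR_3[OF CHAR_gf3] by simp
  then have "pderiv (monom 1 n + 1 :: gf3 poly) = monom 1 (n - 1)"
    by (simp add: pderiv_add pderiv_monom)
  moreover have "pderiv (monom 1 n + 1) = M * pderiv generator + generator * pderiv M"
    unfolding xn_plus_1_eq by (rule pderiv_mult)
  ultimately have deriv: "monom 1 (n - 1) = M * pderiv generator + generator * pderiv M"
    by simp
  have "poly (lift (monom 1 (n - 1))) \<gamma> = 0"
    unfolding deriv using \<open>poly (lift generator) \<gamma> = 0\<close> min_poly unfolding is_min_poly_GF3_def
    by (simp add: emb_poly.hom_add emb_poly.hom_mult)
  then show False
    using gamma_nonzero by (simp add: poly_monom)
qed

lemma trace_formula:
  assumes "degree v < n" "c \<in> negacyclic_code n M"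
  shows "gf3_emb (\<Sum>i<n. coeff v i * coeff c i)
    = (\<Sum>j<2 * l. (poly (lift v) (inverse \<gamma>) * poly (lift c) \<gamma>) ^ 3 ^ j)"
proof -
  define F where "F z = poly (lift v) (inverse z) * poly (lift c) z" for z
  have "degree c < n"
    using assms(2) by (simp add: code_eq_multiples)
  have "gf3_emb (\<Sum>i<n. coeff v i * coeff c i) = of_nat n * (\<Sum>i<n. coeff (lift v) i * coeff (lift c) i)"
    by (simp add: emb.hom_sum emb.hom_mult coeff_map_poly of_nat_n_eq_1)
  also have "\<dots> = (\<Sum>t<n. F (\<gamma> ^ (2 * t + 1)))"
    unfolding F_def using assms(1) \<open>degree c < n\<close> by (intro negacyclic_parseval[OF primitive]) simp_all
  also have "\<dots> = (\<Sum>z\<in>(\<lambda>t. \<gamma> ^ (2 * t + 1)) ` {..<n}. F z)"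
    by (rule sum.reindex[OF inj_on_odd_powers, unfolded comp_def, symmetric])
  also have "\<dots> = (\<Sum>z\<in>(\<lambda>j. \<gamma> ^ 3 ^ j) ` {..<2 * l}. F z)"
  proof (rule sum.mono_neutral_right)
    show "\<forall>z\<in>(\<lambda>t. \<gamma> ^ (2 * t + 1)) ` {..<n} - (\<lambda>j. \<gamma> ^ 3 ^ j) ` {..<2 * l}. F z = 0"
    proof
      fix z
      assume "z \<in> (\<lambda>t. \<gamma> ^ (2 * t + 1)) ` {..<n} - (\<lambda>j. \<gamma> ^ 3 ^ j) ` {..<2 * l}"
      then obtain t where "z = \<gamma> ^ (2 * t + 1)" "\<forall>j<2 * l. \<gamma> ^ (2 * t + 1) \<noteq> \<gamma> ^ 3 ^ j"
        by blast
      then have "poly (lift c) z = 0"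
        using code_vanishes_at_nonconjugate[OF assms(2), of "2 * t + 1"] by simp
      then show "F z = 0"
        by (simp add: F_def)
    qed
    show "(\<lambda>j. \<gamma> ^ 3 ^ j) ` {..<2 * l} \<subseteq> (\<lambda>t. \<gamma> ^ (2 * t + 1)) ` {..<n}"
      by (rule conjugates_subset_odd_powers)
  qed simp
  also have "\<dots> = (\<Sum>j<2 * l. F (\<gamma> ^ 3 ^ j))"
    by (rule sum.reindex[OF inj_on_conjugates, unfolded comp_def])
  also have "\<dots> = (\<Sum>j<2 * l. (poly (lift v) (inverse \<gamma>) * poly (lift c) \<gamma>) ^ 3 ^ j)"
    by (simp add: F_def poly_lift_frobenius power_mult_distrib flip: power_inverse)
  finally show ?thesis .
qed

lemma dual_code_eq:
  "dual_code n (negacyclic_code n M) = {v. degree v < n \<and> poly (lift v) (inverse \<gamma>) = 0}"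
proof (intro equalityI subsetI)
  fix v
  assume "v \<in> {v. degree v < n \<and> poly (lift v) (inverse \<gamma>) = 0}"
  then have v: "degree v < n" "poly (lift v) (inverse \<gamma>) = 0"
    by auto
  have "(\<Sum>i<n. coeff v i * coeff c i) = 0" if "c \<in> negacyclic_code n M" for c
  proof -
    show ?thesis
      using trace_formula[OF v(1) that] v(2) by (simp add: power_0_left)
  qed
  then show "v \<in> dual_code n (negacyclic_code n M)"
    using v by (simp add: dual_code_def)
next
  fix v
  assume "v \<in> dual_code n (negacyclic_code n M)"
  then have "degree v < n" and orth: "\<And>c. c \<in> negacyclic_code n M \<Longrightarrow> (\<Sum>i<n. coeff v i * coeff c i) = 0"
    by (auto simp: dual_code_def)
  have "poly (lift v) (inverse \<gamma>) = 0"
  proof (rule ccontr)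
    assume "poly (lift v) (inverse \<gamma>) \<noteq> 0"
    then have "poly (lift v) (inverse \<gamma>) * poly (lift generator) \<gamma> \<noteq> 0"
      using poly_lift_generator_gamma_nonzero by simp
    then obtain b where "degree b < 2 * l"
      and nonzero: "(\<Sum>j<2 * l. (poly (lift v) (inverse \<gamma>) * poly (lift generator) \<gamma> * poly (lift b) \<gamma>) ^ 3 ^ j) \<noteq> 0"
      by (rule trace_form_nondegenerate)
    have "generator * b \<in> negacyclic_code n M"
      using \<open>degree b < 2 * l\<close> degree_generator double_l_less_n generator_nonzero
      by (cases "b = 0") (auto simp: code_eq_multiples degree_mult_eq)
    from trace_formula[OF \<open>degree v < n\<close> this] orth[OF this] nonzero show False
      by (simp add: emb_poly.hom_mult mult.assoc)
  qed
  then show "v \<in> {v. degree v < n \<and> poly (lift v) (inverse \<gamma>) = 0}"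
    using \<open>degree v < n\<close> by simp
qed

end

theorem theorem26:
  fixes l n :: nat and \<beta> :: "'b::field" and M :: "gf3 poly"
  assumes "l \<ge> 2" and "n = 3 ^ l + 1"
    and "CHAR('b) = 3"
    and "primitive_root_unity (2 * n) \<beta>"
    and "is_min_poly_GF3 \<beta> M"
  shows "code_dim (negacyclic_code n M) = 2 * l
       \<and> real (min_dist n (negacyclic_code n M)) \<ge> (3 ^ l + 3) / 2
       \<and> code_dim (dual_code n (negacyclic_code n M)) = n - 2 * l
       \<and> min_dist n (dual_code n (negacyclic_code n M)) = (if odd l then 3 else 4)"
proof -
  interpret C: ternary_negacyclic_code l n \<beta> M
    using assms by unfold_locales auto
  interpret D: ternary_negacyclic l n "inverse \<beta>"
    using assms primitive_root_unity_inverse by unfold_locales auto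
  have dual: "dual_code n (negacyclic_code n M) = D.vanishing_code"
    unfolding C.dual_code_eq D.vanishing_code_def ..
  have "real (3 ^ l + 3) \<le> real (2 * min_dist n (negacyclic_code n M))"
    using C.min_dist_code_ge by (simp only: of_nat_le_iff)
  then have "(3 ^ l + 3) / 2 \<le> real (min_dist n (negacyclic_code n M))"
    by simp
  then show ?thesis
    using C.code_dim D.code_dim_vanishing_code D.min_dist_vanishing_code dual by simp
qed

end
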